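(* Let $\theta_*(\rho)=\inf\{\theta\geq0:h_{\rho,1}(u(\theta))\leq0\}$ for $\rho>0$. (a) $\theta_*(\rho)=1$ for $\rho>\max_{x>0}\frac{k(1-e^{-x})^{k-1}}{x}$. For $\rho\leq\max_{x>0}\frac{k(1-e^{-x})^{k-1}}{x}$, $\theta_*(\rho)=1-(1-e^{-\lambda_\rho})^k$, where $\lambda_\rho$ is the maximum positive solution of $\rho=\frac{k(1-e^{-\lambda})^{k-1}}{\lambda}$; furthermore, for these $\rho$, $y_2(\theta_*(\rho),\rho)=\frac{k}{f_1(\lambda_\rho)}(1-\theta_*(\rho))$. (b) (I) $y_2(\theta_*(\rho_k),\rho_k)=1-\theta_*(\rho_k)>0$. (II) Writing $\theta_k=\theta_*(\rho_k)$ and $\vec y(\theta)=\vec y(\theta,\rho_k)$, we have $y_1'(\theta_k)<0$ and $y_2'(\theta_k)<0$. (III) There exists $\epsilon>0$ such that $\theta\mapsto\vec y(\theta,\rho_k)$ is twice continuously differentiable when considered on $[0,\theta_k]$ and on $[\theta_k,\theta_k+\epsilon]$ separately.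
   Context: Fix $k\geq3$. Let $f_1(\lambda)=\frac{\lambda(e^\lambda-1)}{e^\lambda-1-\lambda}$ for $\lambda>0$, let $\lambda_k$ be the unique positive solution of $f_1(\lambda)=k$, and $\rho_k=k(1-e^{-\lambda_k})^{k-1}/\lambda_k$. Let $u(\theta)=(1-\theta)^{1/k}$ and $h_{\rho,1}(u)=u-1+\exp(-ku^{k-1}/\rho)$. For $\theta\in[0,1)$ and $\vec x=(x_1,x_2)$ with $x_1\ge -k$, $x_2\ge0$, $\max(x_1,0)+2x_2\le k(1-\theta)$, let $\mathfrak p_0=\frac{\max(x_1,0)}{k(1-\theta)}$, $\mathfrak p_1=\frac{x_2\lambda^2}{k(1-\theta)(e^\lambda-1-\lambda)}$, $\mathfrak p_2=\frac{x_2\lambda}{k(1-\theta)}$, where for $x_2>0$, $\lambda$ is the unique positive solution of $f_1(\lambda)=\frac{k(1-\theta)-\max(x_1,0)}{x_2}$, and for $x_2=0$, $\mathfrak p_1=0$, $\mathfrak p_2=1-\mathfrak p_0$. Let $\vec F(\vec x,\theta)=(-1+(k-1)(\mathfrak p_1-\mathfrak p_0),-(k-1)\mathfrak p_1)$. For $\rho>0$, $\vec y(\theta,\rho)=(y_1,y_2)$ is the (unique) solution for $\theta\in[0,1)$ of $\frac{d\vec y}{d\theta}=\vec F(\vec y(\theta),\theta)$ with initial condition $\vec y(0,\rho)=(ke^{-k/\rho},\rho(1-e^{-k/\rho})-ke^{-k/\rho})$; derivatives $'$ are with respect to $\theta$. *)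

theory Defs
  imports "HOL-Analysis.Analysis"
begin

definition f1 :: "real \<Rightarrow> real" where
  "f1 l = l * (exp l - 1) / (exp l - 1 - l)"

definition lam_k :: "nat \<Rightarrow> real" where
  "lam_k k = (THE l. l > 0 \<and> f1 l = real k)"

definition rho_k :: "nat \<Rightarrow> real" where
  "rho_k k = real k * (1 - exp (- lam_k k)) ^ (k - 1) / lam_k k"

definition u_fun :: "nat \<Rightarrow> real \<Rightarrow> real" where
  "u_fun k \<theta> = (1 - \<theta>) powr (1 / real k)"

definition h_fun :: "nat \<Rightarrow> real \<Rightarrow> real \<Rightarrow> real" where
  "h_fun k \<rho> v = v - 1 + exp (- real k * v ^ (k - 1) / \<rho>)"

definition dom_ok :: "nat \<Rightarrow> real \<Rightarrow> real \<times> real \<Rightarrow> bool" where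
  "dom_ok k \<theta> x \<longleftrightarrow> fst x \<ge> - real k \<and> snd x \<ge> 0 \<and>
      max (fst x) 0 + 2 * snd x \<le> real k * (1 - \<theta>)"

definition lam_x :: "nat \<Rightarrow> real \<times> real \<Rightarrow> real \<Rightarrow> real" where
  "lam_x k x \<theta> = (THE l. l > 0 \<and> f1 l = (real k * (1 - \<theta>) - max (fst x) 0) / snd x)"

definition p0 :: "nat \<Rightarrow> real \<times> real \<Rightarrow> real \<Rightarrow> real" where
  "p0 k x \<theta> = max (fst x) 0 / (real k * (1 - \<theta>))"

definition p1 :: "nat \<Rightarrow> real \<times> real \<Rightarrow> real \<Rightarrow> real" where
  "p1 k x \<theta> = (if snd x = 0 then 0 else
     snd x * (lam_x k x \<theta>)^2 / (real k * (1 - \<theta>) * (exp (lam_x k x \<theta>) - 1 - lam_x k x \<theta>)))"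

definition p2 :: "nat \<Rightarrow> real \<times> real \<Rightarrow> real \<Rightarrow> real" where
  "p2 k x \<theta> = (if snd x = 0 then 1 - p0 k x \<theta> else
     snd x * lam_x k x \<theta> / (real k * (1 - \<theta>)))"

definition F_vec :: "nat \<Rightarrow> real \<times> real \<Rightarrow> real \<Rightarrow> real \<times> real" where
  "F_vec k x \<theta> = (-1 + (real k - 1) * (p1 k x \<theta> - p0 k x \<theta>), - (real k - 1) * p1 k x \<theta>)"

definition y_init :: "nat \<Rightarrow> real \<Rightarrow> real \<times> real" where
  "y_init k \<rho> = (real k * exp (- real k / \<rho>),
                  \<rho> * (1 - exp (- real k / \<rho>)) - real k * exp (- real k / \<rho>))"

definition is_y_solution :: "nat \<Rightarrow> (real \<Rightarrow> real \<Rightarrow> real \<times> real) \<Rightarrow> bool" where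
  "is_y_solution k y \<longleftrightarrow> (\<forall>\<rho>>0. y 0 \<rho> = y_init k \<rho> \<and>
     (\<forall>\<theta>\<in>{0..<1}. dom_ok k \<theta> (y \<theta> \<rho>) \<and>
        ((\<lambda>t. y t \<rho>) has_vector_derivative F_vec k (y \<theta> \<rho>) \<theta>) (at \<theta> within {0..<1})))"

definition theta_star :: "nat \<Rightarrow> real \<Rightarrow> real" where
  "theta_star k \<rho> = Inf {\<theta>. \<theta> \<ge> 0 \<and> h_fun k \<rho> (u_fun k \<theta>) \<le> 0}"

definition g_fun :: "nat \<Rightarrow> real \<Rightarrow> real" where
  "g_fun k x = real k * (1 - exp (- x)) ^ (k - 1) / x"

definition M_k :: "nat \<Rightarrow> real" where
  "M_k k = Sup (g_fun k ` {0<..})"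

definition lam_rho :: "nat \<Rightarrow> real \<Rightarrow> real" where
  "lam_rho k \<rho> = (GREATEST l. l > 0 \<and> \<rho> = g_fun k l)"

definition C2_on :: "real set \<Rightarrow> (real \<Rightarrow> 'a::real_normed_vector) \<Rightarrow> bool" where
  "C2_on S g \<longleftrightarrow> (\<exists>g' g''. (\<forall>t\<in>S. (g has_vector_derivative g' t) (at t within S)) \<and>
      (\<forall>t\<in>S. (g' has_vector_derivative g'' t) (at t within S)) \<and> continuous_on S g'')"

end

theory Submission
  imports Defs "HOL-Real_Asymp.Real_Asymp"
begin

text \<open>
  While \<open>y\<^sub>1 \<ge> 0\<close> and \<open>y\<^sub>2 > 0\<close>, the ODE has two first integrals,
  \<open>\<lambda>(\<theta>) (1 - \<theta>)\<^bsup>-(k-1)/k\<^esup>\<close> and \<open>y\<^sub>2 / q(\<lambda>)\<close> with \<open>q(\<lambda>) = 1 - e\<^sup>-\<^sup>\<lambda> - \<lambda> e\<^sup>-\<^sup>\<lambda>\<close>.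
  Hence \<open>\<lambda> = k u\<^bsup>k-1\<^esup>/\<rho>\<close>, \<open>y\<^sub>2 = \<rho> q(\<lambda>)\<close> and \<open>y\<^sub>1 = k u\<^bsup>k-1\<^esup> h\<^sub>\<rho>\<^sub>,\<^sub>1(u)\<close> for \<open>u = u(\<theta>)\<close>,
  so \<open>y\<^sub>1\<close> first vanishes at \<open>\<theta>\<^sub>*(\<rho>)\<close>, which is located through the largest root \<open>\<lambda>\<^sub>\<rho>\<close> of
  \<open>k (1 - e\<^sup>-\<^sup>\<lambda>)\<^bsup>k-1\<^esup>/\<lambda> = \<rho>\<close>; a continuation argument shows that the explicit formulas
  hold up to \<open>\<theta>\<^sub>*\<close>. For \<open>\<rho> = \<rho>\<^sub>k\<close> that root is \<open>\<lambda>\<^sub>k\<close>, because the function decreases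
  beyond \<open>\<lambda>\<^sub>k\<close>; then \<open>f\<^sub>1(\<lambda>\<^sub>k) = k\<close> gives \<open>y\<^sub>2 = 1 - \<theta>\<^sub>*\<close>, and \<open>(k-1)\<lambda>\<^sub>k < e\<^bsup>\<lambda>\<^sub>k\<^esup> - 1\<close>
  makes both components of the field negative. Past \<open>\<theta>\<^sub>*\<close> the component \<open>y\<^sub>1\<close> is negative,
  \<open>p\<^sub>0\<close> vanishes and the field depends smoothly on the trajectory, which gives the one-sided
  \<open>C\<^sup>2\<close> regularity.
\<close>

section \<open>The function \<open>f1\<close> and its inverse\<close>

lemma exp_lower_Taylor_cubic:
  fixes x :: real assumes "0 \<le> x"
  shows "1 + x + x^2/2 + x^3/6 \<le> exp x"
proof -
  obtain t where "exp x = (\<Sum>m<4. x^m / fact m) + exp t / fact 4 * x^4"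
    using Maclaurin_exp_le[of x 4] by blast
  moreover have "0 \<le> exp t / fact 4 * x^4" by simp
  ultimately show ?thesis by (simp add: eval_nat_numeral)
qed

definition exp_tail :: "real \<Rightarrow> real" where
  "exp_tail l = exp l - 1 - l"

lemma exp_tail_pos: assumes "0 < l" shows "0 < exp_tail l"
  using exp_lower_Taylor_cubic[of l] assms unfolding exp_tail_def
  by (smt (verit) zero_less_power divide_pos_pos)

lemma f1_eq: "0 < l \<Longrightarrow> f1 l = l + l^2 / exp_tail l"
  using exp_tail_pos[of l] unfolding f1_def exp_tail_def by (simp add: field_simps power2_eq_square)

lemma f1_gt_self: "0 < l \<Longrightarrow> l < f1 l"
  using f1_eq[of l] exp_tail_pos[of l] by simp

lemma sinh_gt_self: fixes x :: real assumes "0 < x" shows "x < sinh x"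
proof -
  have "sinh 0 - 0 < sinh x - x"
  proof (rule DERIV_pos_imp_increasing_open[OF assms])
    fix t :: real assume "0 < t"
    then have "1 < cosh t" using cosh_real_ge_1[of t] cosh_real_one_iff[of t] by linarith
    then show "\<exists>d. ((\<lambda>t. sinh t - t) has_real_derivative d) (at t) \<and> 0 < d"
      by (intro exI[of _ "cosh t - 1"]) (auto intro!: derivative_eq_intros)
  qed (intro continuous_intros)
  then show ?thesis by simp
qed

definition df1 :: "real \<Rightarrow> real" where
  "df1 l = ((exp l - 1)^2 - l^2 * exp l) / exp_tail l ^ 2"

lemma f1_has_derivative: assumes "0 < l" shows "(f1 has_real_derivative df1 l) (at l)"
proof -
  have "exp l - 1 - l \<noteq> 0" using exp_tail_pos[OF assms] by (simp add: exp_tail_def)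
  then have "((\<lambda>l. l * (exp l - 1) / (exp l - 1 - l)) has_real_derivative
     (((exp l - 1) + l * exp l) * (exp l - 1 - l) - l * (exp l - 1) * (exp l - 1)) / (exp l - 1 - l)^2) (at l)"
    by (auto intro!: derivative_eq_intros simp: power2_eq_square)
  moreover have "(((exp l - 1) + l * exp l) * (exp l - 1 - l) - l * (exp l - 1) * (exp l - 1)) / (exp l - 1 - l)^2 = df1 l"
    unfolding df1_def exp_tail_def by (simp add: algebra_simps power2_eq_square)
  ultimately show ?thesis unfolding f1_def[abs_def] by simp
qed

lemma df1_pos: assumes "0 < l" shows "0 < df1 l"
proof -
  have "exp l - 1 = 2 * exp (l/2) * sinh (l/2)"
    unfolding sinh_field_def by (simp add: field_simps flip: exp_add)
  then have sq: "(exp l - 1)^2 = exp l * (2 * sinh (l/2))^2"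
    by (simp add: power_mult_distrib flip: exp_double)
  have "l^2 < (2 * sinh (l/2))^2"
    using sinh_gt_self[of "l/2"] assms by (intro power_strict_mono) auto
  then have "l^2 * exp l < (exp l - 1)^2" unfolding sq by simp
  then show ?thesis using exp_tail_pos[OF assms] unfolding df1_def by simp
qed

lemma f1_strict_mono: assumes "0 < a" "a < b" shows "f1 a < f1 b"
  using assms(2)
proof (rule DERIV_pos_imp_increasing)
  fix x assume "a \<le> x"
  then have "0 < x" using assms by simp
  then show "\<exists>y. (f1 has_real_derivative y) (at x) \<and> 0 < y"
    using f1_has_derivative df1_pos by blast
qed

lemma f1_inj: "0 < a \<Longrightarrow> 0 < b \<Longrightarrow> f1 a = f1 b \<Longrightarrow> a = b"
  by (metis f1_strict_mono linorder_neqE_linordered_idom order_less_irrefl)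

lemma f1_less_iff: "0 < a \<Longrightarrow> 0 < b \<Longrightarrow> f1 a < f1 b \<longleftrightarrow> a < b"
  by (metis f1_strict_mono f1_inj linorder_neqE order_less_asym)

lemma isCont_f1: "0 < l \<Longrightarrow> isCont f1 l"
  using f1_has_derivative DERIV_isCont by blast

lemma f1_tendsto_2: "(f1 \<longlongrightarrow> 2) (at_right 0)"
  unfolding f1_def[abs_def] by real_asymp

lemma f1_gt_2: assumes "0 < a" shows "2 < f1 a"
proof -
  have "2 \<le> f1 (a/2)"
  proof (rule tendsto_upperbound[OF f1_tendsto_2])
    show "\<forall>\<^sub>F x in at_right 0. f1 x \<le> f1 (a/2)"
      unfolding eventually_at_right_field using assms
      by (intro exI[of _ "a/2"]) (auto intro: less_imp_le[OF f1_strict_mono])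
  qed simp
  also have "f1 (a/2) < f1 a" using assms by (intro f1_strict_mono) auto
  finally show ?thesis .
qed

lemma f1_surj: assumes "2 < r" shows "\<exists>l>0. f1 l = r"
proof -
  have "\<forall>\<^sub>F x in at_right 0. f1 x < r" using f1_tendsto_2 assms by (rule order_tendstoD)
  then obtain a where a: "0 < a" "a < r" "f1 a < r"
    unfolding eventually_at_right_field by (metis assms field_lbound_gt_zero zero_less_numeral less_trans)
  have "r \<le> f1 r" using f1_gt_self[of r] assms by simp
  then obtain x where "a \<le> x" "f1 x = r"
    using IVT[of f1 a r r] a isCont_f1 by force
  then show ?thesis using a by (intro exI[of _ x]) auto
qed

definition f1_inv :: "real \<Rightarrow> real" where
  "f1_inv r = (THE l. l > 0 \<and> f1 l = r)"

lemma f1_inv: assumes "2 < r" shows "0 < f1_inv r" "f1 (f1_inv r) = r"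
proof -
  obtain l where l: "l > 0" "f1 l = r" using f1_surj[OF assms] by blast
  have "f1_inv r = l" unfolding f1_inv_def
    by (rule the_equality) (use l f1_inj in auto)
  then show "0 < f1_inv r" "f1 (f1_inv r) = r" using l by auto
qed

lemma f1_inv_f1: "0 < l \<Longrightarrow> f1_inv (f1 l) = l"
  using f1_inv[of "f1 l"] f1_gt_2[of l] f1_inj by auto

lemma isCont_f1_inv: assumes "2 < r" shows "isCont f1_inv r"
proof -
  define x where "x = f1_inv r"
  have x: "0 < x" "f1 x = r" using f1_inv[OF assms] by (auto simp: x_def)
  have "isCont f1_inv (f1 x)"
  proof (rule isCont_inverse_function[where f=f1 and d="x/2"])
    fix z assume "\<bar>z - x\<bar> \<le> x/2"
    then have "0 < z" using x by arith
    then show "f1_inv (f1 z) = z" "isCont f1 z" using f1_inv_f1 isCont_f1 by auto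
  qed (use x in simp)
  then show ?thesis using x by simp
qed

lemma f1_inv_has_derivative:
  assumes "2 < r" shows "(f1_inv has_real_derivative inverse (df1 (f1_inv r))) (at r)"
proof (rule DERIV_inverse_function[where a=2 and b="r+1"])
  have "0 < f1_inv r" using f1_inv[OF assms] by simp
  then show "(f1 has_real_derivative df1 (f1_inv r)) (at (f1_inv r))" "df1 (f1_inv r) \<noteq> 0"
    using f1_has_derivative df1_pos by (auto simp: less_imp_neq[symmetric])
  show "isCont f1_inv r" using isCont_f1_inv[OF assms] .
  fix y assume "2 < y" "y < r + 1" then show "f1 (f1_inv y) = y" using f1_inv by simp
qed (use assms in auto)

section \<open>The maximum \<open>M_k\<close> and the largest root \<open>lam_rho\<close>\<close>

lemma isCont_g_fun: "0 < x \<Longrightarrow> isCont (g_fun k) x"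
  unfolding g_fun_def[abs_def] by (intro continuous_intros) auto

lemma g_fun_pos: "0 < x \<Longrightarrow> 0 < k \<Longrightarrow> 0 < g_fun k x"
  unfolding g_fun_def by simp

lemma g_fun_less: assumes "0 < x" "2 \<le> k" shows "g_fun k x < real k / x"
proof -
  have "(1 - exp (-x)) ^ (k-1) < 1" using assms by (intro power_less_one_iff[THEN iffD2]) auto
  then show ?thesis unfolding g_fun_def using assms by (simp add: divide_strict_right_mono)
qed

lemma g_fun_le_linear: assumes "0 < x" "x \<le> 1" "3 \<le> k" shows "g_fun k x \<le> real k * x"
proof -
  have "(1 - exp (-x)) ^ (k-1) \<le> x ^ (k-1)"
    using exp_ge_add_one_self[of "-x"] assms by (intro power_mono) auto
  also have "x ^ (k-1) = x^2 * x ^ (k-3)"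
  proof -
    have "k - 1 = 2 + (k - 3)" using assms(3) by simp
    then show ?thesis by (simp only: power_add)
  qed
  also have "\<dots> \<le> x^2" using assms by (simp add: mult_left_le power_le_one)
  finally have "(1 - exp (-x)) ^ (k-1) / x \<le> x" using assms(1) by (simp add: field_simps power2_eq_square)
  then have "real k * ((1 - exp (-x)) ^ (k-1) / x) \<le> real k * x" by (rule mult_left_mono) simp
  then show ?thesis unfolding g_fun_def by simp
qed

lemma g_fun_has_max: assumes "3 \<le> k" shows "\<exists>xm>0. \<forall>x>0. g_fun k x \<le> g_fun k xm"
proof -
  define v where "v = g_fun k 1"
  have v: "0 < v" "v < real k" unfolding v_def using g_fun_pos[of 1 k] g_fun_less[of 1 k] assms by auto
  define a where "a = v / (2 * real k)"
  define b where "b = 2 * real k / v"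
  have a: "0 < a" "a \<le> 1" and b: "1 \<le> b" using v assms by (auto simp: a_def b_def)
  \<comment> \<open>outside the compact interval \<open>[a, b]\<close> both crude bounds on \<open>g_fun k\<close> stay below \<open>v = g_fun k 1\<close>\<close>
  have cont: "continuous_on {a..b} (g_fun k)"
    using a by (intro continuous_at_imp_continuous_on ballI isCont_g_fun) auto
  obtain xm where xm: "xm \<in> {a..b}" "\<And>y. y \<in> {a..b} \<Longrightarrow> g_fun k y \<le> g_fun k xm"
    using continuous_attains_sup[OF _ _ cont] a b by auto
  have v_le: "v \<le> g_fun k xm" using xm(2)[of 1] a b by (auto simp: v_def)
  have "g_fun k x \<le> g_fun k xm" if x: "0 < x" for x
  proof -
    consider "x < a" | "x \<in> {a..b}" | "b < x" by force
    then show ?thesis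
    proof cases
      case 1
      then have "g_fun k x \<le> real k * a" using g_fun_le_linear[of x k] x a assms
        by (smt (verit) mult_left_mono of_nat_0_le_iff)
      also have "\<dots> < v" using v assms by (simp add: a_def)
      finally show ?thesis using v_le by simp
    next
      case 3
      have "g_fun k x < real k / x" using g_fun_less[of x k] x assms by auto
      also have "real k / x \<le> real k / b" using 3 b by (intro divide_left_mono) auto
      also have "real k / b < v" using v by (simp add: b_def)
      finally show ?thesis using v_le by simp
    qed (use xm in auto)
  qed
  moreover have "xm > 0" using xm a by auto
  ultimately show ?thesis by blast
qed

lemma M_k_attained:
  assumes "3 \<le> k"
  obtains xm where "0 < xm" "M_k k = g_fun k xm" "\<And>x. 0 < x \<Longrightarrow> g_fun k x \<le> M_k k"
proof -
  obtain xm where xm: "xm > 0" "\<forall>x>0. g_fun k x \<le> g_fun k xm" using g_fun_has_max[OF assms] by blast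
  have "M_k k = g_fun k xm" unfolding M_k_def by (rule cSup_eq_maximum) (use xm in auto)
  then show ?thesis using that xm by auto
qed

lemma g_fun_le_M_k: "3 \<le> k \<Longrightarrow> 0 < x \<Longrightarrow> g_fun k x \<le> M_k k"
  by (metis M_k_attained)

lemma Sup_superlevel_set:
  fixes f :: "real \<Rightarrow> real"
  assumes cont: "\<And>x. 0 < x \<Longrightarrow> isCont f x"
    and L_def: "L = {x. 0 < x \<and> c \<le> f x}" and x0: "x0 \<in> L" and bdd: "bdd_above L"
  shows "Sup L \<in> L" "f (Sup L) = c"
proof -
  have x0: "0 < x0" "c \<le> f x0" and "x0 \<in> L" using x0 by (auto simp: L_def)
  \<comment> \<open>restricted to \<open>[x0, \<infinity>)\<close>, where \<open>f\<close> is continuous, the set is closed\<close>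
  define L' where "L' = {x0..} \<inter> f -` {c..}"
  have "L' \<subseteq> L" "x0 \<in> L'" using x0 by (auto simp: L_def L'_def)
  have "closed L'" unfolding L'_def using x0(1)
    by (intro continuous_closed_preimage continuous_at_imp_continuous_on) (auto intro: cont)
  moreover have "bdd_above L'" by (rule bdd_above_mono[OF bdd \<open>L' \<subseteq> L\<close>])
  ultimately have "Sup L' \<in> L'" using \<open>x0 \<in> L'\<close> closed_contains_Sup by blast
  moreover have "Sup L' = Sup L"
  proof (rule antisym)
    show "Sup L' \<le> Sup L" using \<open>x0 \<in> L'\<close> cSup_subset_mono[OF _ bdd \<open>L' \<subseteq> L\<close>] by blast
    have "x \<le> Sup L'" if "x \<in> L" for x
    proof (cases "x0 \<le> x")
      case True
      then have "x \<in> L'" using that by (auto simp: L_def L'_def)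
      then show ?thesis by (rule cSup_upper[OF _ \<open>bdd_above L'\<close>])
    next
      case False
      then show ?thesis using cSup_upper[OF \<open>x0 \<in> L'\<close> \<open>bdd_above L'\<close>] by simp
    qed
    then show "Sup L \<le> Sup L'" using \<open>x0 \<in> L\<close> by (intro cSup_least) auto
  qed
  ultimately show mem: "Sup L \<in> L" using \<open>L' \<subseteq> L\<close> by auto
  then have s: "0 < Sup L" "c \<le> f (Sup L)" by (auto simp: L_def)
  show "f (Sup L) = c"
  proof (rule ccontr)
    assume "f (Sup L) \<noteq> c"
    then have "c < f (Sup L)" using s by simp
    then have "\<forall>\<^sub>F x in at_right (Sup L). c < f x"
      using cont[OF s(1)] by (auto simp: isCont_def filterlim_at_split intro: order_tendstoD)
    then obtain b where b: "Sup L < b" "\<And>y. Sup L < y \<Longrightarrow> y < b \<Longrightarrow> c < f y"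
      unfolding eventually_at_right_field by blast
    have "c < f ((Sup L + b) / 2)" using b(1) by (intro b(2)) auto
    then have "(Sup L + b) / 2 \<in> L" using s b(1) by (auto simp: L_def)
    then show False using cSup_upper[OF _ bdd] \<open>Sup L < b\<close> by fastforce
  qed
qed

lemma lam_rho_props:
  assumes k: "3 \<le> k" and rho: "0 < \<rho>" "\<rho> \<le> M_k k"
  shows "0 < lam_rho k \<rho>" "g_fun k (lam_rho k \<rho>) = \<rho>"
    "\<And>x. 0 < x \<Longrightarrow> \<rho> \<le> g_fun k x \<Longrightarrow> x \<le> lam_rho k \<rho>"
proof -
  define L where "L = {x. 0 < x \<and> \<rho> \<le> g_fun k x}"
  obtain xm where "0 < xm" "M_k k = g_fun k xm" using M_k_attained[OF k] by blast
  then have "xm \<in> L" using rho by (simp add: L_def)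
  have "x \<le> real k / \<rho>" if "x \<in> L" for x
  proof -
    have "0 < x" "\<rho> < real k / x" using that g_fun_less[of x k] k by (auto simp: L_def)
    then show ?thesis using rho by (simp add: field_simps)
  qed
  then have bdd: "bdd_above L" by (auto simp: bdd_above_def)
  note sup = Sup_superlevel_set[OF isCont_g_fun L_def \<open>xm \<in> L\<close> bdd]
  have "lam_rho k \<rho> = Sup L" unfolding lam_rho_def
    by (rule Greatest_equality) (use sup cSup_upper[OF _ bdd] in \<open>auto simp: L_def\<close>)
  then show "0 < lam_rho k \<rho>" "g_fun k (lam_rho k \<rho>) = \<rho>"
    "\<And>x. 0 < x \<Longrightarrow> \<rho> \<le> g_fun k x \<Longrightarrow> x \<le> lam_rho k \<rho>"
    using sup cSup_upper[OF _ bdd] by (auto simp: L_def)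
qed

definition dg :: "nat \<Rightarrow> real \<Rightarrow> real" where
  "dg k x = real k * (real (k-1) * (1 - exp (-x))^(k-2) * exp (-x) * x - (1 - exp (-x))^(k-1)) / x^2"

lemma g_fun_has_derivative:
  assumes "0 < x" "2 \<le> k" shows "(g_fun k has_real_derivative dg k x) (at x)"
proof -
  have "(g_fun k has_real_derivative
     (real k * (real (k-1) * (1 - exp (-x))^(k-1-1) * exp (-x)) * x - real k * (1 - exp (-x))^(k-1)) / (x * x)) (at x)"
    unfolding g_fun_def[abs_def] using assms(1)
    by (auto intro!: derivative_eq_intros simp: power2_eq_square)
  moreover have "k - 1 - 1 = k - 2" by simp
  ultimately show ?thesis unfolding dg_def by (simp add: power2_eq_square algebra_simps)
qed

lemma dg_neg:
  assumes "0 < x" "3 \<le> k" "real (k-1) * x < exp x - 1" shows "dg k x < 0"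
proof -
  define q where "q = 1 - exp (-x)"
  have q: "0 < q" using assms by (simp add: q_def)
  have "real (k-1) * x * exp (-x) < (exp x - 1) * exp (-x)"
    using assms(3) by (intro mult_strict_right_mono) auto
  also have "(exp x - 1) * exp (-x) = q" by (simp add: q_def algebra_simps exp_minus)
  finally have neg: "real (k-1) * exp (-x) * x - q < 0" by (simp add: algebra_simps)
  have "q^(k-1) = q^(k-2) * q"
  proof -
    have "k - 1 = Suc (k - 2)" using assms(2) by simp
    then show ?thesis by (simp only: power_Suc mult.commute)
  qed
  then have "real (k-1) * q^(k-2) * exp (-x) * x - q^(k-1) = q^(k-2) * (real (k-1) * exp (-x) * x - q)"
    by (simp add: algebra_simps)
  also have "\<dots> < 0" using neg q by (simp add: mult_pos_neg)
  finally show ?thesis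
    unfolding dg_def q_def[symmetric] using assms by (simp add: divide_neg_pos mult_pos_neg)
qed

lemma g_fun_strict_antimono:
  assumes "3 \<le> k" "0 < a" "a < b" "\<And>x. a \<le> x \<Longrightarrow> x \<le> b \<Longrightarrow> real (k-1) * x < exp x - 1"
  shows "g_fun k b < g_fun k a"
  using assms(3)
proof (rule DERIV_neg_imp_decreasing)
  fix x assume "a \<le> x" "x \<le> b"
  then show "\<exists>y. (g_fun k has_real_derivative y) (at x) \<and> y < 0"
    using g_fun_has_derivative[of x k] dg_neg[of x k] assms by auto
qed

section \<open>\<open>lam_k\<close> and \<open>rho_k\<close>\<close>

lemma exp_key_ineq:
  fixes K :: real assumes K: "3 \<le> K"
  shows "K * (K - 2) + 1 < exp (K * (K - 2) / (K - 1))"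
proof -
  define m where "m = K - 3/2"
  have m: "0 < m" using K by (simp add: m_def)
  have "m \<le> K * (K - 2) / (K - 1)" using K by (simp add: m_def field_simps)
  then have "1 + m + m^2/2 + m^3/6 \<le> exp (K * (K - 2) / (K - 1))"
    using exp_lower_Taylor_cubic[of m] m by (smt (verit) exp_le_cancel_iff)
  moreover have "m^3 - 3*m^2 + 4 = (m-2)^2*(m+1)"
    by (simp add: algebra_simps power2_eq_square power3_eq_cube)
  then have "0 \<le> m^3 - 3*m^2 + 4" using m by simp
  moreover have "K * (K - 2) + 1 = m^2 + m + 1/4"
    unfolding m_def by (simp add: algebra_simps power2_eq_square)
  ultimately show ?thesis by simp
qed

lemma lam_k_eq_f1_inv: "lam_k k = f1_inv (real k)"
  unfolding lam_k_def f1_inv_def ..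

lemma lam_k: assumes "3 \<le> k" shows "0 < lam_k k" "f1 (lam_k k) = real k"
  using f1_inv[of "real k"] assms unfolding lam_k_eq_f1_inv by auto

lemma lam_k_lower:
  assumes k: "3 \<le> k" shows "real k * (real k - 2) / (real k - 1) < lam_k k"
proof -
  define K where "K = real k"
  define \<mu> where "\<mu> = K * (K - 2) / (K - 1)"
  have K: "3 \<le> K" using k by (simp add: K_def)
  have mu: "0 < \<mu>" using K by (simp add: \<mu>_def)
  have "K * \<mu> = (K / (K - 1)) * (K * (K - 2))" using K by (simp add: \<mu>_def field_simps)
  also have "\<dots> < (K / (K - 1)) * (exp \<mu> - 1)"
    using exp_key_ineq[OF K] K by (intro mult_strict_left_mono) (auto simp: \<mu>_def)
  also have "K / (K - 1) = K - \<mu>" using K by (simp add: \<mu>_def field_simps)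
  finally have "\<mu> * (exp \<mu> - 1) < K * exp_tail \<mu>" by (simp add: exp_tail_def algebra_simps)
  then have "f1 \<mu> < f1 (lam_k k)"
    using exp_tail_pos[OF mu] lam_k[OF k] unfolding f1_def exp_tail_def K_def
    by (simp add: divide_less_eq)
  then show ?thesis using f1_less_iff[OF mu lam_k(1)[OF k]] unfolding \<mu>_def K_def by simp
qed

lemma lam_k_gt_1: assumes "3 \<le> k" shows "1 < lam_k k"
proof -
  define K where "K = real k"
  have K: "3 \<le> K" using assms by (simp add: K_def)
  then have "0 \<le> K * (K - 3)" by simp
  then have "K - 1 \<le> K * (K - 2)" by (simp add: algebra_simps)
  then have "1 \<le> K * (K - 2) / (K - 1)" using K by (simp add: field_simps)
  then show ?thesis using lam_k_lower[OF assms] unfolding K_def by linarith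
qed

lemma lam_k_growth: assumes k: "3 \<le> k" shows "real (k-1) * lam_k k < exp (lam_k k) - 1"
proof -
  define K where "K = real k"
  define L where "L = lam_k k"
  have K: "3 \<le> K" using k by (simp add: K_def)
  have L: "0 < L" "f1 L = K" "K * (K - 2) / (K - 1) < L"
    using lam_k[OF k] lam_k_lower[OF k] by (auto simp: K_def L_def)
  have KL: "0 < K - L" using f1_gt_self[OF L(1)] L(2) by simp
  have "L * (exp L - 1) = K * exp_tail L"
    using L(1,2) exp_tail_pos[OF L(1)] unfolding f1_def exp_tail_def by (simp add: divide_eq_eq)
  then have eqn: "K * L = (exp L - 1) * (K - L)" by (simp add: exp_tail_def algebra_simps)
  \<comment> \<open>multiplied by \<open>K - L\<close>, the claim becomes \<open>(K - 1)(K - L) < K\<close>, i.e. the lower bound on \<open>L\<close>\<close>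
  have "(K - 1) * (K - L) < K"
    using L(3) K by (simp add: field_simps)
  then have "(K - 1) * (K - L) * L < K * L" using L(1) by (rule mult_strict_right_mono)
  also note eqn
  finally have "((K - 1) * L) * (K - L) < (exp L - 1) * (K - L)" by (simp add: ac_simps)
  then have "(K - 1) * L < exp L - 1" using KL by simp
  then show ?thesis using k by (simp add: K_def L_def of_nat_diff)
qed

lemma growth_beyond_lam_k:
  assumes k: "3 \<le> k" and x: "lam_k k \<le> x" shows "real (k-1) * x < exp x - 1"
proof -
  define L where "L = lam_k k"
  have L: "real (k-1) * L < exp L - 1" "1 < L" using lam_k_growth[OF k] lam_k_gt_1[OF k] by (auto simp: L_def)
  have xL: "0 \<le> x - L" using x by (simp add: L_def)
  have eL: "real (k-1) < exp L" using L mult_left_mono[of 1 L "real (k-1)"] by simp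
  have "real (k-1) * x \<le> real (k-1) * L + (x - L) * exp L"
    using mult_left_mono[OF less_imp_le[OF eL] xL] by (simp add: algebra_simps)
  also have "\<dots> < exp L * (1 + (x - L)) - 1" using L by (simp add: algebra_simps)
  also have "exp L * (1 + (x - L)) \<le> exp L * exp (x - L)" by (intro mult_left_mono) auto
  finally show ?thesis by (simp flip: exp_add)
qed

lemma rho_k_eq_g_fun: "rho_k k = g_fun k (lam_k k)"
  unfolding rho_k_def g_fun_def ..

lemma rho_k_pos: "3 \<le> k \<Longrightarrow> 0 < rho_k k"
  using rho_k_eq_g_fun g_fun_pos lam_k(1) by simp

lemma rho_k_le_M_k: "3 \<le> k \<Longrightarrow> rho_k k \<le> M_k k"
  using rho_k_eq_g_fun g_fun_le_M_k lam_k(1) by simp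

lemma lam_rho_rho_k: assumes k: "3 \<le> k" shows "lam_rho k (rho_k k) = lam_k k"
proof -
  note lr = lam_rho_props[OF k rho_k_pos[OF k] rho_k_le_M_k[OF k]]
  have ge: "lam_k k \<le> lam_rho k (rho_k k)" using lr(3)[OF lam_k(1)[OF k]] rho_k_eq_g_fun by simp
  \<comment> \<open>past \<open>lam_k k\<close> the function \<open>g_fun k\<close> is strictly decreasing, so it cannot return to \<open>rho_k k\<close>\<close>
  have "\<not> g_fun k (lam_rho k (rho_k k)) < g_fun k (lam_k k)"
    using lr(2) rho_k_eq_g_fun by simp
  then have "\<not> lam_k k < lam_rho k (rho_k k)"
    using g_fun_strict_antimono[OF k lam_k(1)[OF k]] growth_beyond_lam_k[OF k] by blast
  then show ?thesis using ge by simp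
qed

section \<open>The hitting time \<open>theta_star\<close>\<close>

lemma u_fun_pos: "\<theta> < 1 \<Longrightarrow> 0 < u_fun k \<theta>"
  by (simp add: u_fun_def)

lemma u_fun_pow: assumes "\<theta> < 1" "0 < k" shows "u_fun k \<theta> ^ k = 1 - \<theta>"
proof -
  have "u_fun k \<theta> ^ k = u_fun k \<theta> powr real k" using u_fun_pos[OF assms(1)] by (simp add: powr_realpow)
  also have "\<dots> = 1 - \<theta>" unfolding u_fun_def using assms by (simp add: powr_powr)
  finally show ?thesis .
qed

lemma u_fun_le_1: assumes "0 \<le> \<theta>" "\<theta> < 1" "0 < k" shows "u_fun k \<theta> \<le> 1"
  using u_fun_pow[OF assms(2,3)] assms one_less_power[of "u_fun k \<theta>" k] by fastforce

lemma u_fun_of_pow: assumes "0 < v" "0 < k" shows "u_fun k (1 - v ^ k) = v"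
  unfolding u_fun_def using assms by (simp add: powr_realpow[symmetric] powr_powr)

lemma h_fun_nonpos_iff:
  assumes "0 < v" "v \<le> 1" "0 < \<rho>" "2 \<le> k"
  shows "h_fun k \<rho> v \<le> 0 \<longleftrightarrow> \<rho> \<le> g_fun k (real k * v^(k-1) / \<rho>)"
proof -
  define l where "l = real k * v^(k-1) / \<rho>"
  have l: "0 < l" using assms by (simp add: l_def)
  have "h_fun k \<rho> v \<le> 0 \<longleftrightarrow> v \<le> 1 - exp (-l)" unfolding h_fun_def l_def by auto
  also have "\<dots> \<longleftrightarrow> v^(k-1) \<le> (1 - exp (-l))^(k-1)"
    using assms l by (intro power_mono_iff[symmetric]) auto
  also have "\<dots> \<longleftrightarrow> \<rho> * l / real k \<le> (1 - exp (-l))^(k-1)"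
    using assms by (simp add: l_def)
  also have "\<dots> \<longleftrightarrow> \<rho> \<le> g_fun k l"
    unfolding g_fun_def using assms l by (simp add: field_simps)
  finally show ?thesis unfolding l_def .
qed

lemma theta_star_le:
  "0 \<le> \<theta> \<Longrightarrow> h_fun k \<rho> (u_fun k \<theta>) \<le> 0 \<Longrightarrow> theta_star k \<rho> \<le> \<theta>"
  unfolding theta_star_def by (rule cInf_lower) (auto simp: bdd_below_def)

lemma h_fun_pos_below_theta_star:
  "0 \<le> \<theta> \<Longrightarrow> \<theta> < theta_star k \<rho> \<Longrightarrow> 0 < h_fun k \<rho> (u_fun k \<theta>)"
  using theta_star_le[of \<theta> k \<rho>] by fastforce

lemma theta_star_eqI:
  assumes "0 \<le> \<theta>\<^sub>0" "h_fun k \<rho> (u_fun k \<theta>\<^sub>0) \<le> 0"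
    and "\<And>\<theta>. 0 \<le> \<theta> \<Longrightarrow> \<theta> < 1 \<Longrightarrow> h_fun k \<rho> (u_fun k \<theta>) \<le> 0 \<Longrightarrow> \<theta>\<^sub>0 \<le> \<theta>" and "\<theta>\<^sub>0 \<le> 1"
  shows "theta_star k \<rho> = \<theta>\<^sub>0"
  unfolding theta_star_def using assms by (intro cInf_eq_minimum) force+

lemma h_fun_at_1: "2 \<le> k \<Longrightarrow> h_fun k \<rho> (u_fun k 1) = 0"
  by (simp add: u_fun_def h_fun_def)

lemma theta_star_eq_1:
  assumes k: "3 \<le> k" and rho: "0 < \<rho>" "M_k k < \<rho>"
  shows "theta_star k \<rho> = 1"
proof (rule theta_star_eqI)
  show "h_fun k \<rho> (u_fun k 1) \<le> 0" using h_fun_at_1 k by simp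
  fix \<theta> :: real assume \<theta>: "0 \<le> \<theta>" "\<theta> < 1" "h_fun k \<rho> (u_fun k \<theta>) \<le> 0"
  define v where "v = u_fun k \<theta>"
  have v: "0 < v" "v \<le> 1" using u_fun_pos u_fun_le_1 \<theta> k by (auto simp: v_def)
  have "\<rho> \<le> g_fun k (real k * v^(k-1) / \<rho>)" using h_fun_nonpos_iff[OF v rho(1)] \<theta>(3) k by (simp add: v_def)
  also have "\<dots> \<le> M_k k" using v rho k by (intro g_fun_le_M_k) auto
  finally show "1 \<le> \<theta>" using rho by simp
qed simp_all

lemma theta_star_eq:
  assumes k: "3 \<le> k" and rho: "0 < \<rho>" "\<rho> \<le> M_k k"
  shows "theta_star k \<rho> = 1 - (1 - exp (- lam_rho k \<rho>)) ^ k"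
proof -
  note lr = lam_rho_props[OF k rho]
  define u0 where "u0 = 1 - exp (- lam_rho k \<rho>)"
  have u0: "0 < u0" "u0 < 1" using lr(1) by (auto simp: u0_def)
  have lam_eq: "real k * u0^(k-1) / \<rho> = lam_rho k \<rho>"
    using lr(2) lr(1) rho unfolding g_fun_def u0_def by (simp add: field_simps)
  have u_t0: "u_fun k (1 - u0^k) = u0" using u0 k by (intro u_fun_of_pow) auto
  show ?thesis unfolding u0_def[symmetric]
  proof (rule theta_star_eqI)
    show "0 \<le> 1 - u0 ^ k" "1 - u0 ^ k \<le> 1" using u0 by (auto simp: power_le_one)
    show "h_fun k \<rho> (u_fun k (1 - u0^k)) \<le> 0" using u_t0 lam_eq by (simp add: h_fun_def u0_def)
    fix \<theta> :: real assume \<theta>: "0 \<le> \<theta>" "\<theta> < 1" "h_fun k \<rho> (u_fun k \<theta>) \<le> 0"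
    define v where "v = u_fun k \<theta>"
    have v: "0 < v" "v \<le> 1" "v^k = 1 - \<theta>" using u_fun_pos u_fun_le_1 u_fun_pow \<theta> k by (auto simp: v_def)
    have "\<rho> \<le> g_fun k (real k * v^(k-1) / \<rho>)" using h_fun_nonpos_iff[OF v(1,2) rho(1)] \<theta>(3) k by (simp add: v_def)
    then have "real k * v^(k-1) / \<rho> \<le> real k * u0^(k-1) / \<rho>"
      unfolding lam_eq using v rho k by (intro lr(3)) auto
    then have "v^(k-1) \<le> u0^(k-1)" using rho k by (simp add: divide_right_mono field_simps)
    then have "v \<le> u0" using v u0 k power_mono_iff[of v u0 "k-1"] by simp
    then have "v^k \<le> u0^k" using v by (intro power_mono) auto
    then show "1 - u0 ^ k \<le> \<theta>" using v by simp
  qed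
qed

lemma theta_star_in_01:
  assumes "3 \<le> k" "0 < \<rho>" "\<rho> \<le> M_k k" shows "0 < theta_star k \<rho>" "theta_star k \<rho> < 1"
  using theta_star_eq[OF assms] lam_rho_props(1)[OF assms] assms(1)
  by (auto simp: power_less_one_iff)

lemma u_fun_theta_star:
  assumes "3 \<le> k" "0 < \<rho>" "\<rho> \<le> M_k k" shows "u_fun k (theta_star k \<rho>) = 1 - exp (- lam_rho k \<rho>)"
  using theta_star_eq[OF assms] lam_rho_props(1)[OF assms] assms(1) by (simp add: u_fun_of_pow)

lemma lam_rho_eq_at_theta_star:
  assumes "3 \<le> k" "0 < \<rho>" "\<rho> \<le> M_k k"
  shows "real k * u_fun k (theta_star k \<rho>) ^ (k-1) / \<rho> = lam_rho k \<rho>"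
  using lam_rho_props(1,2)[OF assms] assms(2) unfolding u_fun_theta_star[OF assms] g_fun_def
  by (simp add: field_simps)

lemma h_fun_theta_star:
  assumes "3 \<le> k" "0 < \<rho>" "\<rho> \<le> M_k k" shows "h_fun k \<rho> (u_fun k (theta_star k \<rho>)) = 0"
  using lam_rho_eq_at_theta_star[OF assms] unfolding h_fun_def u_fun_theta_star[OF assms] by simp

lemma has_real_derivative_fst:
  "(f has_vector_derivative D) F \<Longrightarrow> ((\<lambda>t. fst (f t)) has_real_derivative fst D) F"
  using bounded_linear.has_vector_derivative[OF bounded_linear_fst]
  by (simp add: has_real_derivative_iff_has_vector_derivative)

lemma has_real_derivative_snd:
  "(f has_vector_derivative D) F \<Longrightarrow> ((\<lambda>t. snd (f t)) has_real_derivative snd D) F"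
  using bounded_linear.has_vector_derivative[OF bounded_linear_snd]
  by (simp add: has_real_derivative_iff_has_vector_derivative)

lemma C2_on_Pair:
  assumes "\<And>t. t \<in> S \<Longrightarrow> (g1 has_real_derivative g1' t) (at t within S)"
    "\<And>t. t \<in> S \<Longrightarrow> (g2 has_real_derivative g2' t) (at t within S)"
    "\<And>t. t \<in> S \<Longrightarrow> (g1' has_real_derivative g1'' t) (at t within S)"
    "\<And>t. t \<in> S \<Longrightarrow> (g2' has_real_derivative g2'' t) (at t within S)"
    "continuous_on S g1''" "continuous_on S g2''"
  shows "C2_on S (\<lambda>t. (g1 t, g2 t))"
  unfolding C2_on_def has_real_derivative_iff_has_vector_derivative
  using assms[unfolded has_real_derivative_iff_has_vector_derivative]
  by (intro exI[of _ "\<lambda>t. (g1' t, g2' t)"] exI[of _ "\<lambda>t. (g1'' t, g2'' t)"])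
    (auto intro!: has_vector_derivative_Pair continuous_on_Pair)

lemma interval_continuation:
  fixes P :: "real \<Rightarrow> bool"
  assumes ab: "a \<le> b"
    and closed: "\<And>s. s \<in> {a..b} \<Longrightarrow> \<forall>t\<in>{a..<s}. P t \<Longrightarrow> P s"
    and extend: "\<And>s. s \<in> {a..<b} \<Longrightarrow> \<forall>t\<in>{a..s}. P t \<Longrightarrow> \<exists>d>0. \<forall>t\<in>{s<..<s+d}. P t"
  shows "t \<in> {a..b} \<Longrightarrow> P t"
proof -
  define G where "G = {s \<in> {a..b}. \<forall>t\<in>{a..s}. P t}"
  have "a \<in> G" using closed[of a] ab by (auto simp: G_def)
  have bdd: "bdd_above G" by (auto simp: G_def bdd_above_def)
  define s where "s = Sup G"
  have "a \<le> s" using cSup_upper[OF \<open>a \<in> G\<close> bdd] by (simp add: s_def)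
  have "s \<le> b" unfolding s_def using \<open>a \<in> G\<close> by (intro cSup_least) (auto simp: G_def)
  have below: "P t" if "t \<in> {a..<s}" for t
  proof -
    have "t < Sup G" using that by (simp add: s_def)
    then obtain s' where "s' \<in> G" "t < s'" using less_cSupD[of G t] \<open>a \<in> G\<close> by blast
    then show ?thesis using that by (simp add: G_def)
  qed
  have "P s" using closed[of s] \<open>a \<le> s\<close> \<open>s \<le> b\<close> below by simp
  have upto_s: "\<forall>t\<in>{a..s}. P t"
  proof
    fix t assume "t \<in> {a..s}"
    then show "P t" using below \<open>P s\<close> by (cases "t = s") auto
  qed
  have "s = b"
  proof (rule ccontr)
    assume "s \<noteq> b"
    then obtain d where d: "0 < d" "\<forall>t\<in>{s<..<s+d}. P t"
      using extend[of s] upto_s \<open>a \<le> s\<close> \<open>s \<le> b\<close> by auto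
    define s' where "s' = min (s + d/2) b"
    have "s < s'" "s' \<le> b" using d \<open>s \<le> b\<close> \<open>s \<noteq> b\<close> by (auto simp: s'_def)
    have "P t" if "t \<in> {a..s'}" for t
    proof (cases "t \<le> s")
      case True then show ?thesis using upto_s that by simp
    next
      case False then show ?thesis using d that by (simp add: s'_def)
    qed
    then have "s' \<in> G" using \<open>s < s'\<close> \<open>s' \<le> b\<close> \<open>a \<le> s\<close> by (simp add: G_def)
    then have "s' \<le> s" unfolding s_def by (rule cSup_upper[OF _ bdd])
    then show False using \<open>s < s'\<close> by simp
  qed
  then show "t \<in> {a..b} \<Longrightarrow> P t" using upto_s by simp
qed

lemma continuous_on_eq_at_right_end:
  fixes f g :: "real \<Rightarrow> real"
  assumes "continuous_on {a..b} f" "continuous_on {a..b} g" "a < b" "\<And>t. t \<in> {a..<b} \<Longrightarrow> f t = g t"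
  shows "f b = g b"
proof -
  have "closed {x \<in> {a..b}. f x - g x = 0}"
    using assms(1,2) by (intro continuous_closed_preimage_constant continuous_on_diff) auto
  moreover have "{a..<b} \<subseteq> {x \<in> {a..b}. f x - g x = 0}" using assms(4) by auto
  ultimately have "closure {a..<b} \<subseteq> {x \<in> {a..b}. f x - g x = 0}" by (rule closure_minimal[rotated])
  moreover have "b \<in> closure {a..<b}" using assms(3) by simp
  ultimately have "b \<in> {x \<in> {a..b}. f x - g x = 0}" by (rule subsetD)
  then show ?thesis by simp
qed

lemma eventually_at_within_imp_interval:
  fixes x b :: real
  assumes ev: "\<forall>\<^sub>F t in at x within S. P t" and "P x" "{x..<b} \<subseteq> S" "x < b"
  shows "\<exists>d>0. x + d < b \<and> (\<forall>t\<in>{x..x+d}. P t)"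
proof -
  obtain e where e: "0 < e" "\<And>t. t \<in> S \<Longrightarrow> t \<noteq> x \<Longrightarrow> dist t x < e \<Longrightarrow> P t"
    using ev unfolding eventually_at by blast
  define d where "d = min (e/2) ((b - x)/2)"
  have "d \<le> (b - x)/2" "d \<le> e/2" unfolding d_def by linarith+
  then have d: "0 < d" "d < e" "x + d < b" using e assms(4) by (auto simp: d_def)
  have "P t" if "t \<in> {x..x+d}" for t
  proof (cases "t = x")
    case False
    then show ?thesis using that d assms(3) by (intro e(2)) (auto simp: dist_real_def)
  qed (use \<open>P x\<close> in simp)
  then show ?thesis using d by blast
qed

section \<open>The trajectory\<close>

definition Q :: "real \<Rightarrow> real" where
  "Q l = l^2 / exp_tail l"

definition dQ :: "real \<Rightarrow> real" where
  "dQ l = (2 * l * exp_tail l - l^2 * (exp l - 1)) / exp_tail l ^ 2"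

lemma Q_has_derivative: assumes "0 < l" shows "(Q has_real_derivative dQ l) (at l)"
proof -
  have "exp l - 1 - l \<noteq> 0" using exp_tail_pos[OF assms] by (simp add: exp_tail_def)
  then have "((\<lambda>l. l^2 / (exp l - 1 - l)) has_real_derivative
      ((2 * l) * (exp l - 1 - l) - l^2 * (exp l - 1)) / (exp l - 1 - l)^2) (at l)"
    by (auto intro!: derivative_eq_intros simp: power2_eq_square)
  then show ?thesis unfolding Q_def[abs_def] dQ_def exp_tail_def by simp
qed

lemma isCont_Q: "0 < l \<Longrightarrow> isCont Q l"
  using Q_has_derivative DERIV_isCont by blast

lemma isCont_dQ: "0 < l \<Longrightarrow> isCont dQ l"
  using exp_tail_pos[of l] unfolding dQ_def[abs_def] exp_tail_def[abs_def]
  by (intro continuous_intros) auto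

lemma isCont_df1: "0 < l \<Longrightarrow> isCont df1 l"
  using exp_tail_pos[of l] unfolding df1_def[abs_def] exp_tail_def[abs_def]
  by (intro continuous_intros) auto

definition pois_ge2 :: "real \<Rightarrow> real" where
  "pois_ge2 l = 1 - exp (-l) - l * exp (-l)"

lemma pois_ge2_eq: "pois_ge2 l = exp (-l) * exp_tail l"
  unfolding pois_ge2_def exp_tail_def by (simp add: algebra_simps exp_minus field_simps)

lemma pois_ge2_pos: "0 < l \<Longrightarrow> 0 < pois_ge2 l"
  using exp_tail_pos pois_ge2_eq by simp

lemma pois_ge2_has_derivative: "(pois_ge2 has_real_derivative l * exp (-l)) (at l)"
  unfolding pois_ge2_def[abs_def] by (auto intro!: derivative_eq_intros simp: algebra_simps)

lemma pois_ge2_mult_f1: assumes "0 < l" shows "pois_ge2 l * f1 l = l * (1 - exp (-l))"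
proof -
  have "pois_ge2 l * f1 l = exp (-l) * (l * (exp l - 1))"
    unfolding pois_ge2_eq f1_def using exp_tail_pos[OF assms] by (simp add: exp_tail_def)
  also have "\<dots> = l * (1 - exp (-l))" by (simp add: algebra_simps exp_minus field_simps)
  finally show ?thesis .
qed

locale ode_trajectory =
  fixes k :: nat and Y :: "real \<Rightarrow> real \<times> real"
  assumes k_ge_3: "3 \<le> k"
    and Y_has_derivative:
      "\<And>\<theta>. \<theta> \<in> {0..<1} \<Longrightarrow> (Y has_vector_derivative F_vec k (Y \<theta>) \<theta>) (at \<theta> within {0..<1})"
begin

definition "y1 t = fst (Y t)"
definition "y2 t = snd (Y t)"
definition "T t = real k * (1 - t)"
definition "ratio t = (T t - max (y1 t) 0) / y2 t"
definition "lam t = f1_inv (ratio t)"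
definition "P0 t = p0 k (Y t) t"
definition "P1 t = p1 k (Y t) t"
definition "F1 t = -1 + (real k - 1) * (P1 t - P0 t)"
definition "F2 t = - (real k - 1) * P1 t"

text \<open>Derivatives of \<open>ratio\<close>, \<open>lam\<close> and \<open>P1\<close> at \<open>t\<close>, given the derivative \<open>md\<close> of
  \<open>max (y1 t) 0\<close> (which is \<open>y1\<close> before the exit time and \<open>0\<close> after it).\<close>
definition "dratio md t = ((- real k - md) * y2 t - (T t - max (y1 t) 0) * F2 t) / (y2 t)^2"
definition "dlam md t = dratio md t / df1 (lam t)"
definition "dP1 md t =
  ((F2 t * Q (lam t) + y2 t * (dQ (lam t) * dlam md t)) * T t + y2 t * Q (lam t) * real k) / (T t)^2"

text \<open>Where \<open>regular t\<close> holds, \<open>lam\<close> (hence \<open>P1\<close>) depends smoothly on \<open>Y t\<close>.\<close>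
definition "regular t \<longleftrightarrow> 0 < y2 t \<and> 2 < ratio t"

lemma Y_eq: "Y = (\<lambda>t. (y1 t, y2 t))"
  by (simp add: y1_def y2_def)

lemma P0_eq: "P0 t = max (y1 t) 0 / T t"
  unfolding P0_def p0_def y1_def T_def ..

lemma P1_eq: "y2 t \<noteq> 0 \<Longrightarrow> P1 t = y2 t * Q (lam t) / T t"
  unfolding P1_def p1_def Q_def exp_tail_def lam_def lam_x_def f1_inv_def ratio_def y1_def y2_def T_def
  by simp

lemma F_vec_eq: "F_vec k (Y t) t = (F1 t, F2 t)"
  unfolding F_vec_def F1_def F2_def P1_def P0_def ..

lemma T_pos: "t < 1 \<Longrightarrow> 0 < T t"
  using k_ge_3 by (simp add: T_def)

lemma T_has_derivative: "(T has_real_derivative - real k) (at t within J)"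
  unfolding T_def[abs_def] by (auto intro!: derivative_eq_intros)

lemma y_has_derivative:
  assumes "J \<subseteq> {0..<1}" "t \<in> J"
  shows "(y1 has_real_derivative F1 t) (at t within J)" "(y2 has_real_derivative F2 t) (at t within J)"
proof -
  have "(Y has_vector_derivative (F1 t, F2 t)) (at t within J)"
    using has_vector_derivative_within_subset[OF Y_has_derivative[of t] assms(1)] assms F_vec_eq[of t] by auto
  then show "(y1 has_real_derivative F1 t) (at t within J)" "(y2 has_real_derivative F2 t) (at t within J)"
    unfolding y1_def[abs_def] y2_def[abs_def] by (auto dest: has_real_derivative_fst has_real_derivative_snd)
qed

lemma continuous_on_Y: "continuous_on {0..<1} Y"
  unfolding continuous_on_eq_continuous_within using Y_has_derivative has_vector_derivative_continuous by blast

lemma continuous_on_T: "continuous_on S T"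
  unfolding T_def[abs_def] by (intro continuous_intros)

lemma continuous_on_y1: "continuous_on {0..<1} y1" and continuous_on_y2: "continuous_on {0..<1} y2"
  unfolding y1_def[abs_def] y2_def[abs_def] using continuous_on_Y by (auto intro: continuous_intros)

lemma lam_pos: "regular t \<Longrightarrow> 0 < lam t"
  using f1_inv(1) by (simp add: regular_def lam_def)

lemma f1_lam: "regular t \<Longrightarrow> f1 (lam t) = ratio t"
  using f1_inv(2) by (simp add: regular_def lam_def)

context
  fixes J assumes J: "J \<subseteq> {0..<1}" and reg: "\<And>s. s \<in> J \<Longrightarrow> regular s"
begin

lemma y2_nonzero: "s \<in> J \<Longrightarrow> y2 s \<noteq> 0"
  using reg[of s] by (auto simp: regular_def)

lemma continuous_on_ratio: "continuous_on J ratio"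
  unfolding ratio_def[abs_def] T_def using J y2_nonzero
  by (intro continuous_intros continuous_on_subset[OF continuous_on_y1] continuous_on_subset[OF continuous_on_y2])
    auto

lemma continuous_on_comp_lam:
  assumes "\<And>l. 0 < l \<Longrightarrow> isCont g l" shows "continuous_on J (\<lambda>s. g (lam s))"
  unfolding continuous_on_eq_continuous_within
proof
  fix s assume s: "s \<in> J"
  have "continuous (at s within J) ratio" using continuous_on_ratio s by (simp add: continuous_on_eq_continuous_within)
  then have "continuous (at s within J) lam"
    using continuous_within_compose3[OF isCont_f1_inv] reg[OF s] unfolding lam_def[abs_def] regular_def by blast
  then show "continuous (at s within J) (\<lambda>s. g (lam s))"
    using continuous_within_compose3[where g=g and f=lam and x=s, OF assms[OF lam_pos[OF reg[OF s]]]] by blast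
qed

lemma continuous_on_P1: "continuous_on J P1"
proof -
  have "continuous_on J (\<lambda>s. y2 s * Q (lam s) / T s)"
    unfolding T_def using J k_ge_3 continuous_on_comp_lam[OF isCont_Q]
    by (intro continuous_intros continuous_on_subset[OF continuous_on_y2]) auto
  then show ?thesis by (rule continuous_on_cong[THEN iffD1, rotated 2]) (use P1_eq y2_nonzero in auto)
qed

lemma continuous_on_F1: "continuous_on J F1"
  unfolding F1_def[abs_def] P0_eq[abs_def] T_def using J continuous_on_P1 k_ge_3
  by (intro continuous_intros continuous_on_subset[OF continuous_on_y1]) auto

context
  fixes m assumes m_eq: "\<And>s. s \<in> J \<Longrightarrow> max (y1 s) 0 = m s"
begin

lemma lam_has_derivative:
  assumes t: "t \<in> J" and m': "(m has_real_derivative md) (at t within J)"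
  shows "(lam has_real_derivative dlam md t) (at t within J)"
proof -
  have "((\<lambda>s. (T s - m s) / y2 s) has_real_derivative
      ((- real k - md) * y2 t - (T t - m t) * F2 t) / (y2 t * y2 t)) (at t within J)"
    by (rule DERIV_divide[OF DERIV_diff[OF T_has_derivative m'] y_has_derivative(2)[OF J t] y2_nonzero[OF t]])
  then have "((\<lambda>s. (T s - m s) / y2 s) has_real_derivative dratio md t) (at t within J)"
    unfolding dratio_def using m_eq[OF t] by (simp add: power2_eq_square)
  then have ratio': "(ratio has_real_derivative dratio md t) (at t within J)"
    by (rule has_field_derivative_transform_within[OF _ zero_less_one t]) (use m_eq in \<open>auto simp: ratio_def\<close>)
  have "2 < ratio t" using reg[OF t] by (simp add: regular_def)
  from DERIV_chain2[OF f1_inv_has_derivative[OF this] ratio']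
  show ?thesis unfolding dlam_def lam_def[abs_def] by (simp add: divide_inverse mult.commute)
qed

lemma P1_has_derivative:
  assumes t: "t \<in> J" and m': "(m has_real_derivative md) (at t within J)"
  shows "(P1 has_real_derivative dP1 md t) (at t within J)"
proof -
  have Tt: "T t \<noteq> 0" using T_pos[of t] J t by auto
  have Q': "((\<lambda>s. Q (lam s)) has_real_derivative dQ (lam t) * dlam md t) (at t within J)"
    by (rule DERIV_chain2[OF Q_has_derivative[OF lam_pos[OF reg[OF t]]] lam_has_derivative[OF t m']])
  have "((\<lambda>s. y2 s * Q (lam s) / T s) has_real_derivative
     ((F2 t * Q (lam t) + (dQ (lam t) * dlam md t) * y2 t) * T t - y2 t * Q (lam t) * (- real k)) / (T t * T t))
     (at t within J)"
    by (rule DERIV_divide[OF DERIV_mult[OF y_has_derivative(2)[OF J t] Q'] T_has_derivative Tt])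
  then have "((\<lambda>s. y2 s * Q (lam s) / T s) has_real_derivative dP1 md t) (at t within J)"
    unfolding dP1_def by (simp add: power2_eq_square algebra_simps)
  then show ?thesis
    by (rule has_field_derivative_transform_within[OF _ zero_less_one t]) (use P1_eq y2_nonzero in auto)
qed

lemma continuous_on_dP1:
  assumes "continuous_on J md" shows "continuous_on J (\<lambda>s. dP1 (md s) s)"
proof -
  have cF2: "continuous_on J F2" unfolding F2_def[abs_def] using continuous_on_P1 by (intro continuous_intros)
  have cy1: "continuous_on J y1" using continuous_on_subset[OF continuous_on_y1 J] .
  have cy2: "continuous_on J y2" using continuous_on_subset[OF continuous_on_y2 J] .
  have cT: "continuous_on J T" by (rule continuous_on_T)
  have Tnz: "s \<in> J \<Longrightarrow> T s \<noteq> 0" for s using T_pos[of s] J by auto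
  have df1nz: "s \<in> J \<Longrightarrow> df1 (lam s) \<noteq> 0" for s using df1_pos[OF lam_pos[OF reg]] by force
  have "continuous_on J (\<lambda>s. dratio (md s) s)" unfolding dratio_def
    using y2_nonzero by (intro continuous_intros cF2 cy2 cT cy1 assms) auto
  then have "continuous_on J (\<lambda>s. dlam (md s) s)" unfolding dlam_def
    using df1nz by (intro continuous_intros continuous_on_comp_lam isCont_df1) auto
  then show ?thesis unfolding dP1_def
    using Tnz by (intro continuous_intros cF2 cy2 cT continuous_on_comp_lam isCont_Q isCont_dQ) auto
qed

lemma C2_on_Y:
  assumes m': "\<And>s. s \<in> J \<Longrightarrow> (m has_real_derivative md s) (at s within J)"
    and cont: "continuous_on J m" "continuous_on J md"
  shows "C2_on J Y"
proof -
  define dP0 where "dP0 s = (md s * T s + m s * real k) / (T s)^2" for s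
  have Tnz: "s \<in> J \<Longrightarrow> T s \<noteq> 0" for s using T_pos[of s] J by auto
  have dF1: "(F1 has_real_derivative (real k - 1) * (dP1 (md t) t - dP0 t)) (at t within J)" if t: "t \<in> J" for t
  proof -
    have "((\<lambda>s. m s / T s) has_real_derivative dP0 t) (at t within J)"
      using DERIV_divide[OF m'[OF t] T_has_derivative Tnz[OF t]]
      by (simp add: dP0_def power2_eq_square)
    from DERIV_cmult[OF DERIV_diff[OF P1_has_derivative[OF t m'[OF t]] this], of "real k - 1"]
    have "((\<lambda>s. -1 + (real k - 1) * (P1 s - m s / T s)) has_real_derivative
        (real k - 1) * (dP1 (md t) t - dP0 t)) (at t within J)"
      by (auto intro: derivative_eq_intros)
    then show ?thesis
      by (rule has_field_derivative_transform_within[OF _ zero_less_one t])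
        (use m_eq in \<open>auto simp: F1_def P0_eq\<close>)
  qed
  have dF2: "(F2 has_real_derivative - (real k - 1) * dP1 (md t) t) (at t within J)" if "t \<in> J" for t
    unfolding F2_def[abs_def] using P1_has_derivative[OF that m'[OF that]] by (auto intro!: derivative_eq_intros)
  have cdP1: "continuous_on J (\<lambda>s. dP1 (md s) s)" using continuous_on_dP1[OF cont(2)] .
  have cdP0: "continuous_on J dP0" unfolding dP0_def[abs_def] using Tnz
    by (intro continuous_intros cont continuous_on_T) auto
  have "continuous_on J (\<lambda>t. (real k - 1) * (dP1 (md t) t - dP0 t))"
    by (intro continuous_on_mult_left continuous_on_diff cdP1 cdP0)
  moreover have "continuous_on J (\<lambda>t. - (real k - 1) * dP1 (md t) t)"
    by (intro continuous_on_mult_left cdP1)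
  ultimately show ?thesis
    by (subst Y_eq) (rule C2_on_Pair[OF y_has_derivative(1)[OF J] y_has_derivative(2)[OF J] dF1 dF2])
qed

end

end

lemma dlam_nonneg_side:
  assumes t: "t < 1" and y1: "0 \<le> y1 t" and reg: "regular t"
  shows "dlam (F1 t) t = - (real k - 1) * lam t / T t"
proof -
  define l where "l = lam t"
  define E where "E = exp_tail l"
  have l: "0 < l" "f1 l = ratio t" using lam_pos[OF reg] f1_lam[OF reg] by (auto simp: l_def)
  have E: "0 < E" using exp_tail_pos[OF l(1)] by (simp add: E_def)
  have T: "0 < T t" using T_pos[OF t] .
  have b: "0 < y2 t" using reg by (simp add: regular_def)
  \<comment> \<open>eliminate \<open>y1 t\<close> through \<open>f1 (lam t) = ratio t\<close>\<close>
  have a: "y1 t = T t - l * (exp l - 1) / E * y2 t"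
    using l(2) y1 b unfolding f1_def ratio_def E_def exp_tail_def by (simp add: field_simps)
  have e: "exp l = E + 1 + l" by (simp add: E_def exp_tail_def)
  have "dratio (F1 t) t = - (real k - 1) * l * df1 l / T t"
    unfolding dratio_def F1_def F2_def P1_eq[OF b[THEN less_imp_neq, symmetric]] P0_eq df1_def
      Q_def l_def[symmetric] E_def[symmetric] max_absorb1[OF y1]
    unfolding a e using E T b by (simp add: field_simps power2_eq_square)
  then show ?thesis using df1_pos[OF l(1)] by (simp add: dlam_def l_def)
qed

context
  fixes s assumes s: "s < 1"
    and nonneg_side: "\<And>t. t \<in> {0..s} \<Longrightarrow> 0 \<le> y1 t \<and> regular t"
begin

lemma upto_s_subset: "{0..s} \<subseteq> {0..<1}"
  using s by auto

lemma lam_has_derivative_nonneg_side: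
  "t \<in> {0..s} \<Longrightarrow> (lam has_real_derivative - (real k - 1) * lam t / T t) (at t within {0..s})"
proof -
  assume t: "t \<in> {0..s}"
  have "(lam has_real_derivative dlam (F1 t) t) (at t within {0..s})"
    by (rule lam_has_derivative[where m=y1])
      (use upto_s_subset nonneg_side t y_has_derivative(1)[OF upto_s_subset] in auto)
  then show ?thesis using dlam_nonneg_side nonneg_side[OF t] t s by simp
qed

lemma lam_first_integral:
  assumes t: "t \<in> {0..s}" shows "lam t = lam 0 * (1 - t) powr ((real k - 1) / real k)"
proof -
  define I where "I x = ln (lam x) - ((real k - 1) / real k) * ln (1 - x)" for x
  have "\<exists>c. \<forall>x\<in>{0..s}. I x = c"
  proof (rule has_field_derivative_zero_constant)
    fix x assume x: "x \<in> {0..s}"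
    have pos: "0 < lam x" "0 < 1 - x" using lam_pos nonneg_side[OF x] x s by auto
    have "(I has_real_derivative 1 / lam x * (- (real k - 1) * lam x / T x)
        - ((real k - 1) / real k) * (1 / (1 - x) * (0 - 1))) (at x within {0..s})"
      unfolding I_def[abs_def]
      by (intro DERIV_diff DERIV_cmult DERIV_chain2[OF DERIV_ln_divide] lam_has_derivative_nonneg_side x pos)
        (auto intro!: derivative_eq_intros)
    then show "(I has_real_derivative 0) (at x within {0..s})"
      using pos k_ge_3 by (simp add: T_def field_simps)
  qed simp
  then have "I t = I 0" using t s by force
  then have "ln (lam t) = ln (lam 0) + ((real k - 1) / real k) * ln (1 - t)" by (simp add: I_def)
  then have "lam t = exp (ln (lam 0) + ((real k - 1) / real k) * ln (1 - t))"
    using lam_pos nonneg_side[OF t] by (metis exp_ln)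
  also have "\<dots> = lam 0 * (1 - t) powr ((real k - 1) / real k)"
    using lam_pos nonneg_side[of 0] t s by (simp add: exp_add powr_def)
  finally show ?thesis .
qed

lemma y2_first_integral:
  assumes t: "t \<in> {0..s}" shows "y2 t / pois_ge2 (lam t) = y2 0 / pois_ge2 (lam 0)"
proof -
  define I where "I x = ln (y2 x) - ln (pois_ge2 (lam x))" for x
  have "\<exists>c. \<forall>x\<in>{0..s}. I x = c"
  proof (rule has_field_derivative_zero_constant)
    fix x assume x: "x \<in> {0..s}"
    have reg: "regular x" using nonneg_side[OF x] by simp
    have pos: "0 < y2 x" "0 < pois_ge2 (lam x)" "0 < exp_tail (lam x)" "0 < T x"
      using reg pois_ge2_pos exp_tail_pos lam_pos T_pos x s by (auto simp: regular_def)
    have "(I has_real_derivative 1 / y2 x * F2 x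
        - 1 / pois_ge2 (lam x) * (lam x * exp (- lam x) * (- (real k - 1) * lam x / T x))) (at x within {0..s})"
      unfolding I_def[abs_def]
      by (intro DERIV_diff DERIV_chain2[OF DERIV_ln_divide] DERIV_chain2[OF pois_ge2_has_derivative]
          y_has_derivative(2)[OF upto_s_subset x] lam_has_derivative_nonneg_side x pos)
    moreover have "F2 x = - (real k - 1) * (y2 x * (lam x ^ 2 / exp_tail (lam x)) / T x)"
      unfolding F2_def using P1_eq[of x] pos by (simp add: Q_def)
    ultimately show "(I has_real_derivative 0) (at x within {0..s})"
      using pos unfolding pois_ge2_eq by (simp add: field_simps power2_eq_square)
  qed simp
  then have "I t = I 0" using t s by force
  have pos: "0 < y2 x" "0 < pois_ge2 (lam x)" if "x \<in> {0..s}" for x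
    using nonneg_side[OF that] lam_pos pois_ge2_pos by (auto simp: regular_def)
  have t0: "0 \<in> {0..s}" using t by simp
  have "ln (y2 t / pois_ge2 (lam t)) = ln (y2 0 / pois_ge2 (lam 0))"
    using \<open>I t = I 0\<close> pos[OF t] pos[OF t0] unfolding I_def by (simp add: ln_div)
  then show ?thesis
    by (rule ln_inj_iff[THEN iffD1, rotated 2]) (use pos[OF t] pos[OF t0] in auto)
qed

end

lemma eventually_regular:
  assumes s: "s \<in> {0..<1}" and reg: "regular s"
  shows "\<forall>\<^sub>F t in at s within {0..<1}. regular t"
proof -
  have y1: "(y1 \<longlongrightarrow> y1 s) (at s within {0..<1})" and y2: "(y2 \<longlongrightarrow> y2 s) (at s within {0..<1})"
    using continuous_on_y1 continuous_on_y2 s by (auto simp: continuous_on_def)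
  have "(ratio \<longlongrightarrow> ratio s) (at s within {0..<1})"
    unfolding ratio_def[abs_def] T_def using reg by (intro tendsto_intros y1 y2) (auto simp: regular_def)
  then show ?thesis using reg unfolding regular_def
    by (intro eventually_conj order_tendstoD(1)[OF y2] order_tendstoD(1)) auto
qed

lemma Y_has_derivative_at: assumes "0 < t" "t < 1" shows "(Y has_vector_derivative (F1 t, F2 t)) (at t)"
proof -
  have "at t within {0..<1} = at t" using assms by (intro at_within_interior) simp
  then show ?thesis using Y_has_derivative[of t] assms F_vec_eq by simp
qed

lemma y1_has_derivative_at: "0 < t \<Longrightarrow> t < 1 \<Longrightarrow> (y1 has_real_derivative F1 t) (at t)"
  using has_real_derivative_fst[OF Y_has_derivative_at] unfolding y1_def[abs_def] by simp

lemma y1_antimono_while_F1_neg: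
  assumes "0 \<le> a" "{a..b} \<subseteq> {0..<1}" "\<And>t. t \<in> {a..b} \<Longrightarrow> F1 t < 0" "t \<in> {a..b}"
  shows "y1 t \<le> y1 a"
proof (rule DERIV_nonpos_imp_decreasing_open[of a t y1])
  show "a \<le> t" using assms(4) by simp
  have "{a..t} \<subseteq> {a..b}" using assms(4) by (simp add: subset_iff)
  then show "continuous_on {a..t} y1" using continuous_on_subset[OF continuous_on_y1] assms(2) by blast
  fix x assume x: "a < x" "x < t"
  then have "x \<in> {a..b}" using assms(4) by simp
  then have "x \<in> {0..<1}" using assms(2) by blast
  then have "0 < x" "x < 1" using assms(1) x(1) by auto
  then show "\<exists>y. (y1 has_real_derivative y) (at x) \<and> y \<le> 0"
    using y1_has_derivative_at assms(3)[OF \<open>x \<in> {a..b}\<close>] by (intro exI[of _ "F1 x"]) auto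
qed

lemma C2_on_Y_after_exit:
  assumes t0: "t0 \<in> {0..<1}" and y1: "y1 t0 = 0" and reg: "regular t0" and F1: "F1 t0 < 0"
  shows "\<exists>\<epsilon>>0. C2_on {t0..t0+\<epsilon>} Y"
proof -
  obtain \<delta> where \<delta>: "0 < \<delta>" "t0 + \<delta> < 1" and reg2: "\<And>t. t \<in> {t0..t0+\<delta>} \<Longrightarrow> regular t"
    using eventually_at_within_imp_interval[OF eventually_regular[OF t0 reg] reg, of 1] t0 by auto
  have J2: "{t0..t0+\<delta>} \<subseteq> {0..<1}" using t0 \<delta> by auto
  have "(F1 \<longlongrightarrow> F1 t0) (at t0 within {t0..t0+\<delta>})"
    using continuous_on_F1[OF J2 reg2] \<delta> by (simp add: continuous_on_def)
  then have ev: "\<forall>\<^sub>F t in at t0 within {t0..t0+\<delta>}. F1 t < 0" using F1 by (rule order_tendstoD)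
  have "\<exists>d>0. t0 + d < t0 + \<delta> \<and> (\<forall>t\<in>{t0..t0+d}. F1 t < 0)"
    by (rule eventually_at_within_imp_interval[OF ev F1]) (use \<delta> in \<open>simp_all add: subset_iff\<close>)
  then
  obtain \<epsilon> where \<epsilon>: "0 < \<epsilon>" "t0 + \<epsilon> < t0 + \<delta>" and neg: "\<And>t. t \<in> {t0..t0+\<epsilon>} \<Longrightarrow> F1 t < 0"
    using \<delta> by auto
  define J where "J = {t0..t0+\<epsilon>}"
  have J: "J \<subseteq> {0..<1}" and regJ: "\<And>t. t \<in> J \<Longrightarrow> regular t"
    using J2 reg2 \<epsilon> by (auto simp: J_def)
  have nonpos: "max (y1 t) 0 = 0" if "t \<in> J" for t
    using y1_antimono_while_F1_neg[of t0 "t0 + \<epsilon>" t] J neg that y1 t0 by (auto simp: J_def)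
  have "C2_on J Y"
    by (rule C2_on_Y[OF J regJ, of "\<lambda>_. 0" "\<lambda>_. 0"]) (simp_all add: nonpos)
  then show ?thesis using \<epsilon> by (auto simp: J_def)
qed

end

locale ode_trajectory_from = ode_trajectory +
  fixes \<rho> :: real
  assumes rho_pos: "0 < \<rho>" and Y_0: "Y 0 = y_init k \<rho>"
begin

lemma initial_values:
  shows "y1 0 = real k * exp (- (real k / \<rho>))" "y2 0 = \<rho> * pois_ge2 (real k / \<rho>)"
    and "lam 0 = real k / \<rho>" "0 < y1 0" "regular 0"
proof -
  define c where "c = real k / \<rho>"
  have c: "0 < c" using rho_pos k_ge_3 by (simp add: c_def)
  show y1: "y1 0 = real k * exp (- (real k / \<rho>))" using Y_0 by (simp add: y1_def y_init_def)
  show y2: "y2 0 = \<rho> * pois_ge2 (real k / \<rho>)"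
    using Y_0 rho_pos by (simp add: y2_def y_init_def pois_ge2_def algebra_simps)
  show "0 < y1 0" using y1 k_ge_3 by simp
  have "ratio 0 = (\<rho> * c - \<rho> * c * exp (- c)) / (\<rho> * pois_ge2 c)"
    unfolding ratio_def T_def y1 y2 c_def[symmetric] using rho_pos by (simp add: c_def)
  also have "\<dots> = (\<rho> * (pois_ge2 c * f1 c)) / (\<rho> * pois_ge2 c)"
    unfolding pois_ge2_mult_f1[OF c] by (simp add: algebra_simps)
  also have "\<dots> = f1 c" using pois_ge2_pos[OF c] rho_pos by simp
  finally have "ratio 0 = f1 c" .
  then show "lam 0 = real k / \<rho>" "regular 0"
    using f1_inv_f1[OF c] f1_gt_2[OF c] pois_ge2_pos[OF c] rho_pos y2
    by (simp_all add: lam_def regular_def c_def)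
qed

definition "lam_explicit t = real k * u_fun k t ^ (k-1) / \<rho>"
definition "y1_explicit t = real k * u_fun k t ^ (k-1) * h_fun k \<rho> (u_fun k t)"
definition "y2_explicit t = \<rho> * pois_ge2 (lam_explicit t)"

lemma lam_explicit_pos: "t < 1 \<Longrightarrow> 0 < lam_explicit t"
  using u_fun_pos k_ge_3 rho_pos by (simp add: lam_explicit_def)

lemma y1_explicit_eq: assumes "t < 1" shows "y1_explicit t = T t - \<rho> * lam_explicit t * (1 - exp (- lam_explicit t))"
proof -
  have "u_fun k t ^ (k-1) * u_fun k t = u_fun k t ^ k"
    using k_ge_3 by (simp flip: power_Suc2)
  then have "T t = real k * u_fun k t ^ (k-1) * u_fun k t"
    using u_fun_pow[OF assms] k_ge_3 by (simp add: T_def mult.assoc)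
  then show ?thesis using rho_pos
    unfolding y1_explicit_def lam_explicit_def h_fun_def by (simp add: algebra_simps)
qed

lemma continuous_on_explicit:
  "continuous_on {0..<1} y1_explicit" "continuous_on {0..<1} y2_explicit"
proof -
  have "continuous_on {0..<1} (u_fun k)" unfolding u_fun_def[abs_def] by (intro continuous_intros) auto
  then show "continuous_on {0..<1} y1_explicit" "continuous_on {0..<1} y2_explicit"
    unfolding y1_explicit_def[abs_def] y2_explicit_def[abs_def] lam_explicit_def[abs_def]
      h_fun_def pois_ge2_def using rho_pos by (auto intro!: continuous_intros)
qed

lemma explicit_solution:
  assumes s: "s < 1" and nonneg_side: "\<And>t. t \<in> {0..s} \<Longrightarrow> 0 \<le> y1 t \<and> regular t" and t: "t \<in> {0..s}"
  shows "lam t = lam_explicit t" "y2 t = y2_explicit t" "y1 t = y1_explicit t"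
proof -
  have t1: "t < 1" using t s by simp
  have "(1 - t) powr ((real k - 1) / real k) = u_fun k t ^ (k-1)"
    using t1 k_ge_3 by (simp add: u_fun_def powr_powr of_nat_diff powr_realpow[symmetric])
  then show lam: "lam t = lam_explicit t"
    using lam_first_integral[OF s nonneg_side t] initial_values(3) by (simp add: lam_explicit_def)
  have "0 < pois_ge2 (lam t)" using pois_ge2_pos lam_pos nonneg_side[OF t] by blast
  then have "y2 t = pois_ge2 (lam t) * (y2 0 / pois_ge2 (lam 0))"
    using y2_first_integral[OF s nonneg_side t] by (simp add: field_simps)
  also have "\<dots> = \<rho> * pois_ge2 (lam t)"
    using initial_values(2,3) pois_ge2_pos[of "real k / \<rho>"] rho_pos k_ge_3 by simp
  finally show y2: "y2 t = y2_explicit t" using lam by (simp add: y2_explicit_def)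
  have "f1 (lam t) = (T t - y1 t) / y2 t"
    using f1_lam[of t] nonneg_side[OF t] by (simp add: ratio_def)
  then have "y1 t = T t - y2 t * f1 (lam t)"
    using nonneg_side[OF t] by (simp add: regular_def field_simps)
  also have "\<dots> = T t - \<rho> * (pois_ge2 (lam_explicit t) * f1 (lam_explicit t))"
    using y2 lam by (simp add: y2_explicit_def)
  also have "\<dots> = y1_explicit t"
    using pois_ge2_mult_f1[OF lam_explicit_pos[OF t1]] y1_explicit_eq[OF t1] by simp
  finally show "y1 t = y1_explicit t" .
qed

lemma regular_if_explicit:
  assumes t: "t < 1" and "y1 t = y1_explicit t" "y2 t = y2_explicit t" "0 \<le> y1_explicit t"
  shows "0 \<le> y1 t \<and> regular t"
proof -
  have l: "0 < lam_explicit t" using lam_explicit_pos[OF t] .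
  have "0 < y2 t" using assms pois_ge2_pos[OF l] rho_pos by (simp add: y2_explicit_def)
  moreover have "ratio t = (\<rho> * (pois_ge2 (lam_explicit t) * f1 (lam_explicit t))) / (\<rho> * pois_ge2 (lam_explicit t))"
    using assms y1_explicit_eq[OF t] pois_ge2_mult_f1[OF l]
    by (simp add: ratio_def y2_explicit_def max_absorb1)
  then have "ratio t = f1 (lam_explicit t)" using pois_ge2_pos[OF l] rho_pos by simp
  ultimately show ?thesis using assms f1_gt_2[OF l] by (simp add: regular_def)
qed

context
  assumes rho_le: "\<rho> \<le> M_k k"
begin

lemmas theta_star_01 = theta_star_in_01[OF k_ge_3 rho_pos rho_le]

lemma y1_explicit_sign:
  assumes "0 \<le> t" "t \<le> theta_star k \<rho>"
  shows "0 \<le> y1_explicit t" and "t < theta_star k \<rho> \<Longrightarrow> 0 < y1_explicit t"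
proof -
  have u: "0 < u_fun k t" using u_fun_pos assms theta_star_01 by simp
  have "0 \<le> h_fun k \<rho> (u_fun k t)"
    using h_fun_pos_below_theta_star[OF assms(1)] h_fun_theta_star[OF k_ge_3 rho_pos rho_le] assms(2)
    by (cases "t < theta_star k \<rho>") force+
  then show "0 \<le> y1_explicit t" using u by (simp add: y1_explicit_def)
  show "0 < y1_explicit t" if "t < theta_star k \<rho>"
    using h_fun_pos_below_theta_star[OF assms(1) that] u k_ge_3 by (simp add: y1_explicit_def)
qed

lemma nonneg_side_upto_theta_star:
  "t \<in> {0..theta_star k \<rho>} \<Longrightarrow> 0 \<le> y1 t \<and> regular t"
proof (rule interval_continuation)
  let ?ts = "theta_star k \<rho>"
  show "0 \<le> ?ts" using theta_star_01 by simp
  fix s assume s: "s \<in> {0..?ts}" and below: "\<forall>t\<in>{0..<s}. 0 \<le> y1 t \<and> regular t"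
  have s1: "s < 1" using s theta_star_01 by simp
  have explicit: "y1 t = y1_explicit t \<and> y2 t = y2_explicit t" if "t \<in> {0..<s}" for t
    using explicit_solution[of t t] below that s1 by auto
  have "y1 s = y1_explicit s \<and> y2 s = y2_explicit s"
  proof (cases "s = 0")
    case True then show ?thesis using explicit_solution[of 0 0] initial_values by auto
  next
    case False
    then have sub: "{0..s} \<subseteq> {0..<1}" and "0 < s" using s s1 by auto
    have "y1 s = y1_explicit s"
      by (rule continuous_on_eq_at_right_end[OF continuous_on_subset[OF continuous_on_y1 sub]
            continuous_on_subset[OF continuous_on_explicit(1) sub] \<open>0 < s\<close>]) (use explicit in blast)
    moreover have "y2 s = y2_explicit s"
      by (rule continuous_on_eq_at_right_end[OF continuous_on_subset[OF continuous_on_y2 sub]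
            continuous_on_subset[OF continuous_on_explicit(2) sub] \<open>0 < s\<close>]) (use explicit in blast)
    ultimately show ?thesis ..
  qed
  then show "0 \<le> y1 s \<and> regular s" using regular_if_explicit[OF s1] y1_explicit_sign(1) s by auto
next
  let ?ts = "theta_star k \<rho>"
  fix s assume s: "s \<in> {0..<?ts}" and upto: "\<forall>t\<in>{0..s}. 0 \<le> y1 t \<and> regular t"
  have s1: "s \<in> {0..<1}" using s theta_star_01 by simp
  have Ps: "0 \<le> y1 s \<and> regular s" using upto s by simp
  have "y1 s = y1_explicit s" using explicit_solution(3)[of s s] upto s1 by simp
  then have "0 < y1 s" using y1_explicit_sign(2) s by simp
  moreover have "(y1 \<longlongrightarrow> y1 s) (at s within {0..<1})"
    using continuous_on_y1 s1 by (simp add: continuous_on_def)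
  ultimately have "\<forall>\<^sub>F t in at s within {0..<1}. 0 < y1 t" by (rule order_tendstoD(1)[rotated])
  then have "\<forall>\<^sub>F t in at s within {0..<1}. 0 \<le> y1 t \<and> regular t"
    using eventually_regular[OF s1] Ps by (auto elim: eventually_elim2)
  from eventually_at_within_imp_interval[OF this Ps _, of 1]
  obtain d where "0 < d" "\<forall>t\<in>{s..s+d}. 0 \<le> y1 t \<and> regular t" using s1 by (auto simp: subset_iff)
  then show "\<exists>d>0. \<forall>t\<in>{s<..<s+d}. 0 \<le> y1 t \<and> regular t" by force
qed

lemma values_at_theta_star:
  shows "y1 (theta_star k \<rho>) = 0" "lam (theta_star k \<rho>) = lam_rho k \<rho>" "regular (theta_star k \<rho>)"
    "y2 (theta_star k \<rho>) = real k / f1 (lam_rho k \<rho>) * (1 - theta_star k \<rho>)"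
proof -
  let ?ts = "theta_star k \<rho>"
  have ts: "?ts \<in> {0..?ts}" "?ts < 1" using theta_star_01 by auto
  note explicit = explicit_solution[OF ts(2) nonneg_side_upto_theta_star ts(1)]
  show y1: "y1 ?ts = 0"
    using explicit(3) h_fun_theta_star[OF k_ge_3 rho_pos rho_le] by (simp add: y1_explicit_def)
  show lam: "lam ?ts = lam_rho k \<rho>"
    using explicit(1) lam_rho_eq_at_theta_star[OF k_ge_3 rho_pos rho_le] by (simp add: lam_explicit_def)
  show reg: "regular ?ts" using nonneg_side_upto_theta_star[OF ts(1)] by simp
  have "T ?ts / y2 ?ts = f1 (lam_rho k \<rho>)" using f1_lam[OF reg] lam y1 by (simp add: ratio_def)
  then show "y2 ?ts = real k / f1 (lam_rho k \<rho>) * (1 - ?ts)"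
    using reg f1_gt_2[OF lam_rho_props(1)[OF k_ge_3 rho_pos rho_le]]
    by (simp add: T_def regular_def field_simps)
qed

end

context
  assumes rho_eq: "\<rho> = rho_k k"
begin

lemma rho_k_le: "\<rho> \<le> M_k k"
  using rho_k_le_M_k[OF k_ge_3] rho_eq by simp

lemma lam_theta_star_rho_k: "lam (theta_star k \<rho>) = lam_k k"
  using values_at_theta_star(2)[OF rho_k_le] lam_rho_rho_k[OF k_ge_3] rho_eq by simp

lemma y2_theta_star_rho_k: "y2 (theta_star k \<rho>) = 1 - theta_star k \<rho>"
  using values_at_theta_star(4)[OF rho_k_le] lam_rho_rho_k[OF k_ge_3] lam_k(2)[OF k_ge_3] rho_eq k_ge_3
  by simp

lemma F_neg_at_theta_star_rho_k: "F1 (theta_star k \<rho>) < 0" "F2 (theta_star k \<rho>) < 0"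
proof -
  let ?ts = "theta_star k \<rho>"
  define l where "l = lam_k k"
  have l: "0 < l" "f1 l = real k" "real (k-1) * l < exp l - 1"
    using lam_k[OF k_ge_3] lam_k_growth[OF k_ge_3] by (auto simp: l_def)
  have y2: "y2 ?ts = 1 - ?ts" "0 < y2 ?ts"
    using y2_theta_star_rho_k theta_star_01[OF rho_k_le] by auto
  have E: "real k * exp_tail l = l * (exp l - 1)"
    using l(2) exp_tail_pos[OF l(1)] unfolding f1_def exp_tail_def by (simp add: field_simps)
  \<comment> \<open>at \<open>\<rho>\<^sub>k\<close> the factor \<open>y2/T\<close> equals \<open>1/k\<close>, and \<open>f1 (lam_k k) = k\<close> makes \<open>P1\<close> explicit\<close>
  have "P1 ?ts = Q l / real k"
    using P1_eq[of ?ts] y2 lam_theta_star_rho_k k_ge_3 by (simp add: T_def l_def)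
  also have "\<dots> = l^2 / (real k * exp_tail l)" by (simp add: Q_def)
  also have "\<dots> = l / (exp l - 1)" unfolding E using l(1) by (simp add: power2_eq_square)
  finally have P1: "P1 ?ts = l / (exp l - 1)" .
  have P0: "P0 ?ts = 0" using P0_eq values_at_theta_star(1)[OF rho_k_le] by simp
  have e1: "0 < exp l - 1" using l(1) by simp
  have "(real k - 1) * P1 ?ts < 1" unfolding P1 using l(3) e1 k_ge_3 by (simp add: field_simps of_nat_diff)
  then show "F1 ?ts < 0" unfolding F1_def P0 by simp
  have "0 < P1 ?ts" unfolding P1 using l(1) e1 by simp
  then show "F2 ?ts < 0" unfolding F2_def using k_ge_3 by (simp add: mult_neg_pos)
qed

lemma C2_on_upto_theta_star_rho_k: "C2_on {0..theta_star k \<rho>} Y"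
proof -
  have J: "{0..theta_star k \<rho>} \<subseteq> {0..<1}" using theta_star_01[OF rho_k_le] by auto
  note nonneg = nonneg_side_upto_theta_star[OF rho_k_le]
  show ?thesis
  proof (rule C2_on_Y[OF J _ _ y_has_derivative(1)[OF J]])
    show "continuous_on {0..theta_star k \<rho>} y1" using continuous_on_subset[OF continuous_on_y1 J] .
    show "continuous_on {0..theta_star k \<rho>} F1" using continuous_on_F1[OF J] nonneg by blast
  qed (use nonneg in auto)
qed

lemma C2_on_after_theta_star_rho_k: "\<exists>\<epsilon>>0. C2_on {theta_star k \<rho>..theta_star k \<rho> + \<epsilon>} Y"
  using C2_on_Y_after_exit values_at_theta_star(1,3)[OF rho_k_le] F_neg_at_theta_star_rho_k(1)
    theta_star_01[OF rho_k_le] by simp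

end

end

lemma ode_trajectory_from_solution:
  assumes "3 \<le> k" "is_y_solution k y" "0 < \<rho>"
  shows "ode_trajectory_from k (\<lambda>t. y t \<rho>) \<rho>"
  using assms unfolding is_y_solution_def by unfold_locales auto

theorem proposition3p3:
  fixes k :: nat and y :: "real \<Rightarrow> real \<Rightarrow> real \<times> real"
  assumes hk: "k \<ge> 3"
    and hy: "is_y_solution k y"
  shows "(\<forall>\<rho>>0. \<rho> > M_k k \<longrightarrow> theta_star k \<rho> = 1)
       \<and> (\<forall>\<rho>>0. \<rho> \<le> M_k k \<longrightarrow>
            theta_star k \<rho> = 1 - (1 - exp (- lam_rho k \<rho>)) ^ k
          \<and> snd (y (theta_star k \<rho>) \<rho>) = real k / f1 (lam_rho k \<rho>) * (1 - theta_star k \<rho>))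
       \<and> (snd (y (theta_star k (rho_k k)) (rho_k k)) = 1 - theta_star k (rho_k k)
          \<and> 1 - theta_star k (rho_k k) > 0)
       \<and> (\<exists>D. ((\<lambda>t. y t (rho_k k)) has_vector_derivative D) (at (theta_star k (rho_k k)))
              \<and> fst D < 0 \<and> snd D < 0)
       \<and> (\<exists>\<epsilon>>0. C2_on {0..theta_star k (rho_k k)} (\<lambda>t. y t (rho_k k))
              \<and> C2_on {theta_star k (rho_k k)..theta_star k (rho_k k) + \<epsilon>} (\<lambda>t. y t (rho_k k)))"
proof (intro conjI allI impI)
  fix \<rho> :: real assume "0 < \<rho>" "M_k k < \<rho>"
  then show "theta_star k \<rho> = 1" using theta_star_eq_1 hk by blast
next
  fix \<rho> :: real assume rho: "0 < \<rho>" "\<rho> \<le> M_k k"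
  show "theta_star k \<rho> = 1 - (1 - exp (- lam_rho k \<rho>)) ^ k" using theta_star_eq[OF hk rho] .
  interpret ode_trajectory_from k "\<lambda>t. y t \<rho>" \<rho> by (rule ode_trajectory_from_solution[OF hk hy rho(1)])
  show "snd (y (theta_star k \<rho>) \<rho>) = real k / f1 (lam_rho k \<rho>) * (1 - theta_star k \<rho>)"
    using values_at_theta_star(4)[OF rho(2)] by (simp add: y2_def)
next
  interpret ode_trajectory_from k "\<lambda>t. y t (rho_k k)" "rho_k k"
    by (rule ode_trajectory_from_solution[OF hk hy rho_k_pos[OF hk]])
  let ?ts = "theta_star k (rho_k k)"
  show "snd (y ?ts (rho_k k)) = 1 - ?ts" using y2_theta_star_rho_k[OF refl] by (simp add: y2_def)
  show "1 - ?ts > 0" using theta_star_01[OF rho_k_le[OF refl]] by simp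
  show "\<exists>D. ((\<lambda>t. y t (rho_k k)) has_vector_derivative D) (at ?ts) \<and> fst D < 0 \<and> snd D < 0"
    using Y_has_derivative_at theta_star_01[OF rho_k_le[OF refl]] F_neg_at_theta_star_rho_k[OF refl]
    by (intro exI[of _ "(F1 ?ts, F2 ?ts)"]) simp
  show "\<exists>\<epsilon>>0. C2_on {0..?ts} (\<lambda>t. y t (rho_k k)) \<and> C2_on {?ts..?ts + \<epsilon>} (\<lambda>t. y t (rho_k k))"
    using C2_on_upto_theta_star_rho_k[OF refl] C2_on_after_theta_star_rho_k[OF refl] by blast
qed

end
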